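(* Let $g\in\mathscr H$. Two solutions $f,h\in\mathscr H$ of $L(y)=g$ are equal if and only if $f_\gamma=h_\gamma$ for all $\gamma\in-\mathcal S(L)$.
   Context: Let $\mathbf K$ be a field and $\ell\geq 2$ an integer. Let $\mathscr H$ be the field of Hahn series $f=\sum_{\gamma\in\mathbb Q}f_\gamma z^\gamma$ with coefficients in $\mathbf K$ and well-ordered support. Let $\phi_\ell$ be the automorphism $f(z)\mapsto f(z^\ell)$. Let $L=a_n\phi_\ell^n+\dots+a_0$ with $n\geq1$, $a_i\in\mathbf K[z]$, $a_0a_n\neq0$, acting by $L(f)=\sum_i a_i f(z^{\ell^i})$. The Newton polygon of $L$ is the convex hull of $\{(\ell^i,j): 0\le i\le n,\ j\geq\operatorname{val} a_i\}\subset\mathbb R^2$ (where $\operatorname{val} a_i$ is the $z$-adic valuation); the slopes of its non-vertical edges form the set $\mathcal S(L)$, and $-\mathcal S(L)=\{-\mu:\mu\in\mathcal S(L)\}$. *)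

theory Defs
  imports "HOL-Analysis.Analysis" "HOL-Computational_Algebra.Polynomial"
begin

text \<open>Hahn series over a field K with exponents in the rationals, represented by
their coefficient function; the support must be well-ordered.\<close>

definition hsupp :: "(rat \<Rightarrow> 'k::zero) \<Rightarrow> rat set" where
  "hsupp f = {\<gamma>. f \<gamma> \<noteq> 0}"

definition is_hahn :: "(rat \<Rightarrow> 'k::zero) \<Rightarrow> bool" where
  "is_hahn f \<longleftrightarrow> wf {(x, y). x \<in> hsupp f \<and> y \<in> hsupp f \<and> x < y}"

text \<open>The i-th power of the Mahler operator: f(z) \<mapsto> f(z^(l^i)).
Coefficient of z^\<gamma> in f(z^(l^i)) is f_(\<gamma>/l^i).\<close>
definition mahler_pow :: "nat \<Rightarrow> nat \<Rightarrow> (rat \<Rightarrow> 'k) \<Rightarrow> (rat \<Rightarrow> 'k)" where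
  "mahler_pow l i f = (\<lambda>\<gamma>. f (\<gamma> / of_nat (l ^ i)))"

definition poly_hmult :: "'k::comm_semiring_1 poly \<Rightarrow> (rat \<Rightarrow> 'k) \<Rightarrow> (rat \<Rightarrow> 'k)" where
  "poly_hmult p f = (\<lambda>\<gamma>. \<Sum>j\<le>degree p. coeff p j * f (\<gamma> - of_nat j))"

definition mahler_op :: "nat \<Rightarrow> nat \<Rightarrow> (nat \<Rightarrow> 'k::comm_semiring_1 poly) \<Rightarrow> (rat \<Rightarrow> 'k) \<Rightarrow> (rat \<Rightarrow> 'k)" where
  "mahler_op l n a f = (\<lambda>\<gamma>. \<Sum>i\<le>n. poly_hmult (a i) (mahler_pow l i f) \<gamma>)"

text \<open>Newton polygon: convex hull of {(l^i, j) : 0 \<le> i \<le> n, j \<ge> val a_i}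
(terms with a_i = 0 have valuation +\<infinity> and contribute no points).\<close>
definition newton_polygon :: "nat \<Rightarrow> nat \<Rightarrow> (nat \<Rightarrow> 'k::idom poly) \<Rightarrow> (real \<times> real) set" where
  "newton_polygon l n a = convex hull
     {(real (l ^ i), j) | i j. i \<le> n \<and> a i \<noteq> 0 \<and> real (order 0 (a i)) \<le> j}"

definition newton_slopes :: "nat \<Rightarrow> nat \<Rightarrow> (nat \<Rightarrow> 'k::idom poly) \<Rightarrow> real set" where
  "newton_slopes l n a = {\<mu>. \<exists>E. E face_of newton_polygon l n a \<and> aff_dim E = 1 \<and>
      (\<exists>p\<in>E. \<exists>q\<in>E. fst p \<noteq> fst q \<and> \<mu> = (snd q - snd p) / (fst q - fst p))}"

end

theory Submission
  imports Defs
begin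

(* The difference d = f - h solves L(d) = 0. If d \<noteq> 0, let \<gamma>\<^sub>0 be the least exponent of
   its support. The lowest term of a_i \<phi>^i(d) sits at the exponent val a_i + l^i \<gamma>\<^sub>0, so the
   coefficient of L(d) at the minimum m of these exponents is a nonzero multiple of d_\<gamma>\<^sub>0 unless
   the minimum is attained by two indices i \<noteq> k. Then the line y + \<gamma>\<^sub>0 x = m supports the Newton
   polygon along the edge through (l^i, val a_i) and (l^k, val a_k), so -\<gamma>\<^sub>0 is a slope, and
   f, h differ at the exponent \<gamma>\<^sub>0 \<in> -S(L). *)

lemma coeff_less_order_0:
  fixes p :: "'a::idom poly"
  assumes "p \<noteq> 0" "k < order 0 p"
  shows "coeff p k = 0"
  using assms monom_1_dvd_iff monom_1_dvd_iff' by blast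

lemma coeff_order_0_neq_0:
  fixes p :: "'a::idom poly"
  assumes "p \<noteq> 0"
  shows "coeff p (order 0 p) \<noteq> 0"
proof
  assume "coeff p (order 0 p) = 0"
  then have "\<forall>k<Suc (order 0 p). coeff p k = 0"
    using coeff_less_order_0[OF assms] less_Suc_eq by auto
  then show False
    using assms monom_1_dvd_iff monom_1_dvd_iff' by (metis Suc_n_not_le_n)
qed

lemma is_hahn_has_least:
  assumes "is_hahn f" "Q \<subseteq> hsupp f" "Q \<noteq> {}"
  shows "\<exists>z\<in>Q. \<forall>y\<in>Q. z \<le> y"
proof -
  obtain x where "x \<in> Q" using assms(3) by blast
  then obtain z where "z \<in> Q"
    and min: "\<And>y. (y, z) \<in> {(x, y). x \<in> hsupp f \<and> y \<in> hsupp f \<and> x < y} \<Longrightarrow> y \<notin> Q"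
    using wfE_min[OF assms(1)[unfolded is_hahn_def]] by blast
  have "z \<le> y" if "y \<in> Q" for y
  proof (rule ccontr)
    assume "\<not> z \<le> y"
    then have "(y, z) \<in> {(x, y). x \<in> hsupp f \<and> y \<in> hsupp f \<and> x < y}"
      using that \<open>z \<in> Q\<close> assms(2) by auto
    then show False using min that by blast
  qed
  with \<open>z \<in> Q\<close> show ?thesis by blast
qed

lemma is_hahn_union_has_least:
  assumes "is_hahn f" "is_hahn h" "Q \<subseteq> hsupp f \<union> hsupp h" "Q \<noteq> {}"
  shows "\<exists>z\<in>Q. \<forall>y\<in>Q. z \<le> y"
proof (cases "Q \<inter> hsupp f = {} \<or> Q \<inter> hsupp h = {}")
  case True
  then have "Q \<subseteq> hsupp f \<or> Q \<subseteq> hsupp h" using assms(3) by blast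
  then show ?thesis using is_hahn_has_least assms by metis
next
  case False
  obtain a where a: "a \<in> Q \<inter> hsupp f" "\<forall>y\<in>Q \<inter> hsupp f. a \<le> y"
    using is_hahn_has_least[OF assms(1), of "Q \<inter> hsupp f"] False by blast
  obtain b where b: "b \<in> Q \<inter> hsupp h" "\<forall>y\<in>Q \<inter> hsupp h. b \<le> y"
    using is_hahn_has_least[OF assms(2), of "Q \<inter> hsupp h"] False by blast
  have "min a b \<in> Q" using a b by (simp add: min_def)
  moreover have "min a b \<le> y" if "y \<in> Q" for y
    using a(2) b(2) that assms(3) by (meson IntI UnE min.coboundedI1 min.coboundedI2 subsetD)
  ultimately show ?thesis by blast
qed

lemma mahler_op_diff:
  fixes f h :: "rat \<Rightarrow> 'k::comm_ring_1"
  shows "mahler_op l n a (\<lambda>\<gamma>. f \<gamma> - h \<gamma>) = (\<lambda>\<gamma>. mahler_op l n a f \<gamma> - mahler_op l n a h \<gamma>)"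
  by (simp add: mahler_op_def poly_hmult_def mahler_pow_def sum_subtractf right_diff_distrib)

lemma poly_hmult_at_lowest:
  fixes p :: "'k::idom poly" and e :: "rat \<Rightarrow> 'k"
  assumes "p \<noteq> 0" and supp: "\<And>\<gamma>. e \<gamma> \<noteq> 0 \<Longrightarrow> \<beta> \<le> \<gamma>"
    and "m \<le> of_nat (order 0 p) + \<beta>"
  shows "poly_hmult p e m =
    (if m = of_nat (order 0 p) + \<beta> then coeff p (order 0 p) * e \<beta> else 0)"
proof -
  define v where "v = order 0 p"
  have off_v: "coeff p j * e (m - of_nat j) = 0" if "j \<noteq> v" for j
  proof (cases "j < v")
    case True
    then show ?thesis using coeff_less_order_0[OF \<open>p \<noteq> 0\<close>] by (simp add: v_def)
  next
    case False
    with \<open>j \<noteq> v\<close> have "m - of_nat j < \<beta>"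
      using assms(3) by (simp add: v_def)
    then have "e (m - of_nat j) = 0" using supp not_le by blast
    then show ?thesis by simp
  qed
  have "v \<in> {..degree p}" using order_degree[OF \<open>p \<noteq> 0\<close>] by (simp add: v_def)
  moreover have "(\<Sum>j\<in>{..degree p} - {v}. coeff p j * e (m - of_nat j)) = 0"
    using off_v by (intro sum.neutral) auto
  ultimately have "poly_hmult p e m = coeff p v * e (m - of_nat v)"
    unfolding poly_hmult_def by (simp add: sum.remove[of "{..degree p}" v])
  moreover have "e (m - of_nat v) = 0" if "m \<noteq> of_nat v + \<beta>"
    using that assms(3) supp[of "m - of_nat v"] by (auto simp: v_def)
  ultimately show ?thesis by (auto simp: v_def)
qed

lemma mahler_pow_supp:
  assumes "0 < l" "\<And>\<gamma>. d \<gamma> \<noteq> 0 \<Longrightarrow> \<gamma>\<^sub>0 \<le> \<gamma>" "mahler_pow l i d \<gamma> \<noteq> 0"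
  shows "of_nat (l ^ i) * \<gamma>\<^sub>0 \<le> \<gamma>"
proof -
  have "\<gamma>\<^sub>0 \<le> \<gamma> / of_nat (l ^ i)"
    using assms(2,3) by (simp add: mahler_pow_def)
  then show ?thesis using assms(1) by (simp add: pos_le_divide_eq mult.commute)
qed

lemma mahler_pow_at_scaled:
  assumes "0 < l"
  shows "mahler_pow l i d (of_nat (l ^ i) * \<gamma>) = d \<gamma>"
  using assms by (simp add: mahler_pow_def)

(* The valuation of a_i \<phi>^i(z^\<gamma>) = a_i(z) z^(l^i \<gamma>). *)
definition mahler_weight :: "nat \<Rightarrow> (nat \<Rightarrow> 'k::idom poly) \<Rightarrow> rat \<Rightarrow> nat \<Rightarrow> rat" where
  "mahler_weight l a \<gamma> i = of_nat (order 0 (a i)) + of_nat (l ^ i) * \<gamma>"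

lemma mahler_op_at_lowest:
  fixes a :: "nat \<Rightarrow> 'k::idom poly" and d :: "rat \<Rightarrow> 'k"
  assumes "0 < l" and supp: "\<And>\<gamma>. d \<gamma> \<noteq> 0 \<Longrightarrow> \<gamma>\<^sub>0 \<le> \<gamma>"
    and m_le: "\<And>i. i \<le> n \<Longrightarrow> a i \<noteq> 0 \<Longrightarrow> m \<le> mahler_weight l a \<gamma>\<^sub>0 i"
  shows "mahler_op l n a d m =
    (\<Sum>i\<in>{i\<in>{..n}. a i \<noteq> 0 \<and> mahler_weight l a \<gamma>\<^sub>0 i = m}. coeff (a i) (order 0 (a i))) * d \<gamma>\<^sub>0"
proof -
  have "poly_hmult (a i) (mahler_pow l i d) m =
      (if a i \<noteq> 0 \<and> mahler_weight l a \<gamma>\<^sub>0 i = m then coeff (a i) (order 0 (a i)) * d \<gamma>\<^sub>0 else 0)"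
    if "i \<le> n" for i
  proof (cases "a i = 0")
    case True
    then show ?thesis by (simp add: poly_hmult_def)
  next
    case False
    have supp_i: "\<And>\<gamma>. mahler_pow l i d \<gamma> \<noteq> 0 \<Longrightarrow> of_nat (l ^ i) * \<gamma>\<^sub>0 \<le> \<gamma>"
      using mahler_pow_supp[of l d \<gamma>\<^sub>0 i] assms(1) supp by blast
    have "poly_hmult (a i) (mahler_pow l i d) m = (if m = mahler_weight l a \<gamma>\<^sub>0 i
        then coeff (a i) (order 0 (a i)) * mahler_pow l i d (of_nat (l ^ i) * \<gamma>\<^sub>0) else 0)"
      using poly_hmult_at_lowest[OF False supp_i] m_le[OF that False] by (simp add: mahler_weight_def)
    then show ?thesis
      using False mahler_pow_at_scaled[OF assms(1)] by auto
  qed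
  then have "mahler_op l n a d m = (\<Sum>i\<le>n.
      if a i \<noteq> 0 \<and> mahler_weight l a \<gamma>\<^sub>0 i = m then coeff (a i) (order 0 (a i)) * d \<gamma>\<^sub>0 else 0)"
    unfolding mahler_op_def by (intro sum.cong) auto
  also have "\<dots> = (\<Sum>i\<in>{i\<in>{..n}. a i \<noteq> 0 \<and> mahler_weight l a \<gamma>\<^sub>0 i = m}.
      coeff (a i) (order 0 (a i)) * d \<gamma>\<^sub>0)"
    by (rule sum.inter_filter[symmetric]) simp
  finally show ?thesis
    by (simp add: sum_distrib_right)
qed

lemma newton_polygon_subset_halfplane:
  assumes "\<And>i. i \<le> n \<Longrightarrow> a i \<noteq> 0 \<Longrightarrow> c \<le> real (order 0 (a i)) + real (l ^ i) * \<mu>"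
  shows "newton_polygon l n a \<subseteq> {x. c \<le> (\<mu>, 1) \<bullet> x}"
  unfolding newton_polygon_def
proof (rule hull_minimal)
  show "convex {x. c \<le> (\<mu>, 1) \<bullet> x}"
    by (rule convex_halfspace_ge)
  show "{(real (l ^ i), j) |i j. i \<le> n \<and> a i \<noteq> 0 \<and> real (order 0 (a i)) \<le> j}
      \<subseteq> {x. c \<le> (\<mu>, 1) \<bullet> x}"
    using assms by (fastforce simp: inner_Pair mult.commute)
qed

lemma newton_slope_of_supporting_line:
  assumes P: "newton_polygon l n a \<subseteq> {x. c \<le> (\<mu>, 1) \<bullet> x}"
    and "p \<in> newton_polygon l n a" "q \<in> newton_polygon l n a"
    and "(\<mu>, 1) \<bullet> p = c" "(\<mu>, 1) \<bullet> q = c" "fst p \<noteq> fst q"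
  shows "- \<mu> \<in> newton_slopes l n a"
proof -
  define E where "E = newton_polygon l n a \<inter> {x. (\<mu>, 1) \<bullet> x = c}"
  have face: "E face_of newton_polygon l n a"
    unfolding E_def
    by (rule face_of_Int_supporting_hyperplane_ge) (use P in \<open>auto simp: newton_polygon_def\<close>)
  have "aff_dim E \<le> aff_dim {x :: real \<times> real. (\<mu>, 1) \<bullet> x = c}"
    by (rule aff_dim_subset) (auto simp: E_def)
  also have "\<dots> = 1"
    by (subst aff_dim_hyperplane) (auto simp: zero_prod_def)
  finally have "aff_dim E \<le> 1" .
  have "p \<noteq> q" using \<open>fst p \<noteq> fst q\<close> by auto
  then have "1 = aff_dim {p, q}" by simp
  also have "\<dots> \<le> aff_dim E"
    by (rule aff_dim_subset) (use assms in \<open>auto simp: E_def\<close>)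
  finally have "aff_dim E = 1" using \<open>aff_dim E \<le> 1\<close> by simp
  moreover have "- \<mu> = (snd q - snd p) / (fst q - fst p)"
    using assms(4-6) by (cases p, cases q) (simp add: inner_Pair field_simps)
  ultimately show ?thesis
    unfolding newton_slopes_def using face assms(2-6) by (auto simp: E_def)
qed

lemma mahler_kernel_least_exponent_slope:
  fixes a :: "nat \<Rightarrow> 'k::idom poly" and d :: "rat \<Rightarrow> 'k"
  assumes "l \<ge> 2" "a 0 \<noteq> 0" "mahler_op l n a d = (\<lambda>_. 0)"
    and "d \<gamma>\<^sub>0 \<noteq> 0" "\<And>\<gamma>. d \<gamma> \<noteq> 0 \<Longrightarrow> \<gamma>\<^sub>0 \<le> \<gamma>"
  shows "- real_of_rat \<gamma>\<^sub>0 \<in> newton_slopes l n a"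
proof -
  define J where "J = {i\<in>{..n}. a i \<noteq> 0}"
  define m where "m = Min (mahler_weight l a \<gamma>\<^sub>0 ` J)"
  have "finite J" "0 \<in> J" using assms(2) by (auto simp: J_def)
  then have "m \<in> mahler_weight l a \<gamma>\<^sub>0 ` J"
    unfolding m_def by (intro Min_in) auto
  have m_le: "\<And>i. i \<le> n \<Longrightarrow> a i \<noteq> 0 \<Longrightarrow> m \<le> mahler_weight l a \<gamma>\<^sub>0 i"
    unfolding m_def using \<open>finite J\<close> by (simp add: J_def)
  define I where "I = {i\<in>{..n}. a i \<noteq> 0 \<and> mahler_weight l a \<gamma>\<^sub>0 i = m}"
  have "0 < l" using assms(1) by simp
  have cancel: "(\<Sum>i\<in>I. coeff (a i) (order 0 (a i))) * d \<gamma>\<^sub>0 = 0"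
    using mahler_op_at_lowest[of l d \<gamma>\<^sub>0 n a m, OF \<open>0 < l\<close> assms(5) m_le] assms(3)
    by (simp add: I_def fun_eq_iff)
  obtain i k where ik: "i \<in> I" "k \<in> I" "i \<noteq> k"
  proof -
    obtain i where "i \<in> I" using \<open>m \<in> _\<close> by (auto simp: I_def J_def)
    moreover have "I \<noteq> {i}"
    proof
      assume "I = {i}"
      moreover have "coeff (a i) (order 0 (a i)) \<noteq> 0"
        using \<open>i \<in> I\<close> by (simp add: I_def coeff_order_0_neq_0)
      ultimately show False
        using cancel assms(4) by simp
    qed
    ultimately show thesis using that by blast
  qed
  define pt where "pt j = (real (l ^ j), real (order 0 (a j)))" for j
  have weight: "real_of_rat (mahler_weight l a \<gamma>\<^sub>0 j) = (real_of_rat \<gamma>\<^sub>0, 1) \<bullet> pt j" for j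
    by (simp add: mahler_weight_def pt_def inner_Pair of_rat_add of_rat_mult of_rat_power mult.commute)
  have halfplane: "newton_polygon l n a \<subseteq> {x. real_of_rat m \<le> (real_of_rat \<gamma>\<^sub>0, 1) \<bullet> x}"
  proof (rule newton_polygon_subset_halfplane)
    fix j assume "j \<le> n" "a j \<noteq> 0"
    then have "real_of_rat m \<le> real_of_rat (mahler_weight l a \<gamma>\<^sub>0 j)"
      using m_le by (simp add: of_rat_less_eq)
    then show "real_of_rat m \<le> real (order 0 (a j)) + real (l ^ j) * real_of_rat \<gamma>\<^sub>0"
      by (simp add: weight pt_def inner_Pair mult.commute)
  qed
  have vertex: "pt j \<in> newton_polygon l n a" if "j \<in> I" for j
    unfolding newton_polygon_def pt_def using that by (intro hull_inc) (auto simp: I_def)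
  have on_line: "(real_of_rat \<gamma>\<^sub>0, 1) \<bullet> pt j = real_of_rat m" if "j \<in> I" for j
    using that by (simp add: I_def flip: weight)
  have "fst (pt i) \<noteq> fst (pt k)"
    using ik(3) assms(1) by (simp add: pt_def power_inject_exp)
  then show ?thesis
    using newton_slope_of_supporting_line[OF halfplane vertex vertex on_line on_line] ik(1,2) by blast
qed

theorem mainTheorem5:
  fixes l n :: nat and a :: "nat \<Rightarrow> 'k::field poly" and g f h :: "rat \<Rightarrow> 'k"
  assumes "l \<ge> 2" and "n \<ge> 1"
    and "a 0 \<noteq> 0" and "a n \<noteq> 0"
    and "is_hahn g" and "is_hahn f" and "is_hahn h"
    and "mahler_op l n a f = g" and "mahler_op l n a h = g"
  shows "f = h \<longleftrightarrow>
    (\<forall>\<gamma>::rat. real_of_rat \<gamma> \<in> uminus ` newton_slopes l n a \<longrightarrow> f \<gamma> = h \<gamma>)"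
proof
  assume agree: "\<forall>\<gamma>::rat. real_of_rat \<gamma> \<in> uminus ` newton_slopes l n a \<longrightarrow> f \<gamma> = h \<gamma>"
  show "f = h"
  proof (rule ccontr)
    assume "f \<noteq> h"
    define d where "d = (\<lambda>\<gamma>. f \<gamma> - h \<gamma>)"
    have kernel: "mahler_op l n a d = (\<lambda>_. 0)"
      using assms(8,9) by (simp add: d_def mahler_op_diff)
    have "{\<gamma>. d \<gamma> \<noteq> 0} \<subseteq> hsupp f \<union> hsupp h" "{\<gamma>. d \<gamma> \<noteq> 0} \<noteq> {}"
      using \<open>f \<noteq> h\<close> by (auto simp: d_def hsupp_def)
    from is_hahn_union_has_least[OF assms(6,7) this]
    obtain \<gamma>\<^sub>0 where least: "d \<gamma>\<^sub>0 \<noteq> 0" "\<And>\<gamma>. d \<gamma> \<noteq> 0 \<Longrightarrow> \<gamma>\<^sub>0 \<le> \<gamma>"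
      by auto
    have "- real_of_rat \<gamma>\<^sub>0 \<in> newton_slopes l n a"
      using mahler_kernel_least_exponent_slope[where a = a, OF assms(1,3) kernel least] .
    then have "f \<gamma>\<^sub>0 = h \<gamma>\<^sub>0"
      using agree by (metis image_eqI minus_minus)
    with \<open>d \<gamma>\<^sub>0 \<noteq> 0\<close> show False by (simp add: d_def)
  qed
qed simp

end
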